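(* Let $G=(V,E,w)$ be a connected weighted graph with $n$ vertices and let $e\in E$. Then $$ n\cdot w_e\cdot B_e^{2}=\sum_{\{s,t\}\subseteq V}\frac{f_{st}(e)^{2}}{w_e}, $$ where the sum is over unordered pairs of distinct vertices.
   Context: $G=(V,E,w)$ is an undirected graph with positive edge weights $w_e$. Each edge is given an arbitrary fixed orientation $(s,t)$; the boundary matrix $\partial\in\mathbb{R}^{|V|\times|E|}$ has column $\partial 1_e=1_s-1_t$ for $e=(s,t)$, where $1_x$ is the indicator vector of $x$. $W$ is the diagonal matrix of edge weights and $L=\partial W\partial^{T}$ is the graph Laplacian; $L^{+}$ is its Moore–Penrose pseudoinverse and $L^{2+}=(L^{+})^2$. The $st$-electrical flow is $f_{st}=W\partial^{T}L^{+}(1_s-1_t)\in\mathbb{R}^{E}$. The biharmonic distance is $B_{st}=\sqrt{(1_s-1_t)^{T}L^{2+}(1_s-1_t)}$ and $B_e:=B_{st}$ for $e=\{s,t\}$. *)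

theory Defs
  imports "HOL-Analysis.Analysis"
begin

text \<open>Graphs: vertices are the elements of a finite type 'v, edges the elements of a
finite type 'e; each edge e carries a fixed orientation (src e, tgt e).\<close>

definition indic :: "'v::finite \<Rightarrow> real^'v" where
  "indic x = (\<chi> i. if i = x then 1 else 0)"

definition boundary :: "('e::finite \<Rightarrow> 'v::finite) \<Rightarrow> ('e \<Rightarrow> 'v) \<Rightarrow> real^'e^'v" where
  "boundary src tgt = (\<chi> v e. (if v = src e then 1 else 0) - (if v = tgt e then 1 else 0))"

definition diagm :: "('e::finite \<Rightarrow> real) \<Rightarrow> real^'e^'e" where
  "diagm w = (\<chi> i j. if i = j then w i else 0)"

definition laplacian :: "('e::finite \<Rightarrow> 'v::finite) \<Rightarrow> ('e \<Rightarrow> 'v) \<Rightarrow> ('e \<Rightarrow> real) \<Rightarrow> real^'v^'v" where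
  "laplacian src tgt w = boundary src tgt ** diagm w ** transpose (boundary src tgt)"

definition pinv :: "real^'n::finite^'n \<Rightarrow> real^'n^'n" where
  "pinv A = (THE X. A ** X ** A = A \<and> X ** A ** X = X \<and>
                    transpose (A ** X) = A ** X \<and> transpose (X ** A) = X ** A)"

definition elec_flow :: "('e::finite \<Rightarrow> 'v::finite) \<Rightarrow> ('e \<Rightarrow> 'v) \<Rightarrow> ('e \<Rightarrow> real) \<Rightarrow> 'v \<Rightarrow> 'v \<Rightarrow> real^'e" where
  "elec_flow src tgt w s t =
     (diagm w ** transpose (boundary src tgt) ** pinv (laplacian src tgt w)) *v (indic s - indic t)"

definition biharmonic :: "('e::finite \<Rightarrow> 'v::finite) \<Rightarrow> ('e \<Rightarrow> 'v) \<Rightarrow> ('e \<Rightarrow> real) \<Rightarrow> 'v \<Rightarrow> 'v \<Rightarrow> real" where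
  "biharmonic src tgt w s t =
     sqrt ((indic s - indic t) \<bullet>
       ((pinv (laplacian src tgt w) ** pinv (laplacian src tgt w)) *v (indic s - indic t)))"

definition graph_connected :: "('e \<Rightarrow> 'v) \<Rightarrow> ('e \<Rightarrow> 'v) \<Rightarrow> bool" where
  "graph_connected src tgt \<longleftrightarrow>
     (\<forall>u v. (u, v) \<in> ({(src e, tgt e) | e. True} \<union> {(tgt e, src e) | e. True})\<^sup>*)"

end

theory Submission
  imports Defs
begin

(* For a connected graph, L + J is invertible, where J is the orthogonal projection onto the
   constant vectors, and the pseudoinverse of L is (L + J)^-1 - J; so L^+ is symmetric and
   kills the constants. Let p = L^+ (1_s - 1_t) be the potential of the unit current along
   e = (s, t). Symmetry of L^+ gives f_uv(e) = w_e (p_u - p_v); moreover B_e^2 = |p|^2 and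
   the entries of p sum to 0, so sum_{u<v} (p_u - p_v)^2 = n |p|^2 - (sum_u p_u)^2 = n B_e^2. *)

lemma matrix_add_rdistrib: "((A::'a::semiring_1^'n^'m) + B) ** C = A ** C + B ** C"
  by (vector matrix_matrix_mult_def sum.distrib[symmetric] field_simps)

lemma matrix_diff_ldistrib: "(A::'a::ring_1^'n^'m) ** (B - C) = A ** B - A ** C"
  by (vector matrix_matrix_mult_def sum_subtractf[symmetric] field_simps)

lemma matrix_diff_rdistrib: "((A::'a::ring_1^'n^'m) - B) ** C = A ** C - B ** C"
  by (vector matrix_matrix_mult_def sum_subtractf[symmetric] field_simps)

lemma transpose_diff: "transpose (A - B) = transpose A - transpose B"
  by (vector transpose_def)

lemma inner_symmetric_matrix:
  assumes "transpose A = A"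
  shows "x \<bullet> (A *v y) = (A *v x) \<bullet> (y :: real^'n)"
proof -
  have "A *v x = x v* A"
    by (metis assms transpose_matrix_vector)
  then show ?thesis
    by (simp add: dot_lmul_matrix)
qed

definition penrose_inverse :: "real^'n::finite^'n \<Rightarrow> real^'n^'n \<Rightarrow> bool" where
  "penrose_inverse A X \<longleftrightarrow>
     A ** X ** A = A \<and> X ** A ** X = X \<and>
     transpose (A ** X) = A ** X \<and> transpose (X ** A) = X ** A"

lemma penrose_inverse_transpose:
  assumes "penrose_inverse A X"
  shows "penrose_inverse (transpose A) (transpose X)"
proof -
  have "transpose A ** transpose X ** transpose A = transpose (A ** X ** A)"
    and "transpose X ** transpose A ** transpose X = transpose (X ** A ** X)"
    and "transpose (transpose A ** transpose X) = transpose (transpose (X ** A))"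
    and "transpose (transpose X ** transpose A) = transpose (transpose (A ** X))"
    by (simp_all add: matrix_transpose_mul matrix_mul_assoc)
  with assms show ?thesis
    unfolding penrose_inverse_def by (simp add: matrix_transpose_mul)
qed

lemma penrose_inverse_eq_mult:
  assumes X: "penrose_inverse A X" and Y: "penrose_inverse A Y"
  shows "X = X ** A ** Y"
proof -
  have X2: "X ** A ** X = X" and X3: "transpose (A ** X) = A ** X"
    using X unfolding penrose_inverse_def by auto
  have Y1: "A ** Y ** A = A" and Y3: "transpose (A ** Y) = A ** Y"
    using Y unfolding penrose_inverse_def by auto
  have "X = X ** transpose (A ** X)"
    using X2 X3 by (simp add: matrix_mul_assoc)
  also have "\<dots> = X ** transpose X ** transpose (A ** Y ** A)"
    by (simp add: Y1 matrix_transpose_mul matrix_mul_assoc)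
  also have "\<dots> = X ** transpose (A ** X) ** transpose (A ** Y)"
    by (simp add: matrix_transpose_mul matrix_mul_assoc)
  also have "\<dots> = X ** A ** Y"
    using X2 X3 Y3 by (simp add: matrix_mul_assoc)
  finally show ?thesis .
qed

lemma penrose_inverse_unique:
  assumes X: "penrose_inverse A X" and Y: "penrose_inverse A Y"
  shows "X = Y"
proof -
  have "transpose Y = transpose Y ** transpose A ** transpose X"
    using penrose_inverse_eq_mult[OF penrose_inverse_transpose[OF Y] penrose_inverse_transpose[OF X]] .
  then have "transpose (transpose Y) = transpose (transpose Y ** transpose A ** transpose X)"
    by (rule arg_cong)
  then have "Y = X ** A ** Y"
    by (simp add: matrix_transpose_mul matrix_mul_assoc)
  with penrose_inverse_eq_mult[OF X Y] show ?thesis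
    by metis
qed

lemma pinv_eqI:
  assumes "penrose_inverse A X"
  shows "pinv A = X"
proof -
  have "(THE X. penrose_inverse A X) = X"
    using assms by (rule the_equality) (metis assms penrose_inverse_unique)
  then show ?thesis
    unfolding pinv_def penrose_inverse_def .
qed

lemma penrose_inverse_symmetric:
  assumes X: "penrose_inverse A X" and "transpose A = A"
  shows "transpose X = X"
proof -
  have "penrose_inverse A (transpose X)"
    using penrose_inverse_transpose[OF X] \<open>transpose A = A\<close> by simp
  from penrose_inverse_unique[OF X this] show ?thesis
    by (rule sym)
qed

lemma penrose_inverse_kernel:
  assumes X: "penrose_inverse A X" and "transpose A *v x = 0"
  shows "X *v x = 0"
proof -
  have "X ** transpose (A ** X) = X"
    using X unfolding penrose_inverse_def by (simp add: matrix_mul_assoc)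
  then have "X ** transpose X ** transpose A = X"
    by (simp add: matrix_transpose_mul matrix_mul_assoc)
  then have "X *v x = (X ** transpose X ** transpose A) *v x"
    by simp
  also have "\<dots> = (X ** transpose X) *v (transpose A *v x)"
    by (simp only: matrix_vector_mul_assoc)
  finally show ?thesis
    using \<open>transpose A *v x = 0\<close> by simp
qed

lemma penrose_inverse_inverse_plus_projection:
  fixes A P M :: "real^'n::finite^'n"
  assumes P_sym: "transpose P = P" and P_idem: "P ** P = P"
    and AP: "A ** P = 0" and PA: "P ** A = 0"
    and M: "M ** (A + P) = mat 1"
  shows "penrose_inverse A (M - P)"
proof -
  have M': "(A + P) ** M = mat 1"
    using M matrix_left_right_inverse by blast
  have "M ** P = M ** ((A + P) ** P)"
    by (simp add: matrix_add_rdistrib AP P_idem)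
  then have MP: "M ** P = P"
    by (simp add: matrix_mul_assoc M)
  have "P ** M = (P ** (A + P)) ** M"
    by (simp add: matrix_add_ldistrib PA P_idem)
  then have PM: "P ** M = P"
    by (simp add: matrix_mul_assoc[symmetric] M')
  have AX: "A ** (M - P) = mat 1 - P"
  proof -
    have "A ** (M - P) = (A + P) ** M - P ** M - A ** P"
      by (simp add: matrix_diff_ldistrib matrix_add_rdistrib)
    then show ?thesis
      by (simp add: M' PM AP)
  qed
  have XA: "(M - P) ** A = mat 1 - P"
  proof -
    have "(M - P) ** A = M ** (A + P) - M ** P - P ** A"
      by (simp add: matrix_diff_rdistrib matrix_add_ldistrib)
    then show ?thesis
      by (simp add: M MP PA)
  qed
  have "A ** (M - P) ** A = A"
    using AX by (simp add: matrix_diff_rdistrib PA)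
  moreover have "(M - P) ** A ** (M - P) = M - P"
    using XA by (simp add: matrix_diff_rdistrib matrix_diff_ldistrib PM P_idem)
  ultimately show ?thesis
    unfolding penrose_inverse_def by (simp add: AX XA transpose_diff P_sym)
qed

lemma vector_mult_boundary: "(x v* boundary src tgt) $ a = x $ src a - x $ tgt a"
  by (simp add: vector_matrix_mult_def boundary_def right_diff_distrib sum_subtractf
      if_distrib[of "(*) _"] sum.delta cong: if_cong)

lemma diagm_mult: "(diagm w *v x) $ a = w a * x $ a"
  by (simp add: matrix_vector_mult_def diagm_def if_distrib[of "\<lambda>c. c * _"] sum.delta
      cong: if_cong)

lemma transpose_diagm: "transpose (diagm w) = diagm w"
  by (vector transpose_def diagm_def)

lemma laplacian_symmetric: "transpose (laplacian src tgt w) = laplacian src tgt w"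
  by (simp add: laplacian_def matrix_transpose_mul transpose_diagm matrix_mul_assoc)

lemma laplacian_quadratic_form:
  "x \<bullet> (laplacian src tgt w *v x) = (\<Sum>a\<in>UNIV. w a * (x $ src a - x $ tgt a)\<^sup>2)"
proof -
  let ?d = "x v* boundary src tgt"
  have "x \<bullet> (laplacian src tgt w *v x) = ?d \<bullet> (diagm w *v ?d)"
    by (simp add: laplacian_def dot_lmul_matrix matrix_vector_mul_assoc[symmetric])
  then show ?thesis
    by (simp add: inner_vec_def diagm_mult vector_mult_boundary power2_eq_square mult_ac)
qed

lemma laplacian_mult_one: "laplacian src tgt w *v 1 = 0"
proof -
  have "1 v* boundary src tgt = 0"
    by (simp add: vec_eq_iff vector_mult_boundary)
  then show ?thesis
    by (simp add: laplacian_def matrix_vector_mul_assoc[symmetric])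
qed

definition mean_proj :: "real^'n::finite^'n" where
  "mean_proj = (\<chi> i j. 1 / real CARD('n))"

lemma mean_proj_symmetric: "transpose mean_proj = mean_proj"
  by (vector transpose_def mean_proj_def)

lemma mean_proj_idempotent: "mean_proj ** mean_proj = mean_proj"
  by (simp add: mean_proj_def matrix_matrix_mult_def vec_eq_iff power2_eq_square)

lemma mult_mean_proj_eq_0:
  assumes "A *v 1 = 0"
  shows "A ** mean_proj = 0"
  using assms
  by (simp add: vec_eq_iff matrix_matrix_mult_def matrix_vector_mult_def mean_proj_def
      sum_divide_distrib[symmetric])

lemma mean_proj_mult_eq_0:
  assumes "1 v* A = 0"
  shows "mean_proj ** A = 0"
  using assms
  by (simp add: vec_eq_iff matrix_matrix_mult_def vector_matrix_mult_def mean_proj_def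
      sum_divide_distrib[symmetric])

lemma inner_mean_proj:
  fixes x :: "real^'n::finite"
  shows "x \<bullet> (mean_proj *v x) = (\<Sum>i\<in>UNIV. x $ i)\<^sup>2 / real CARD('n)"
  by (simp add: inner_vec_def matrix_vector_mult_def mean_proj_def sum_divide_distrib[symmetric]
      sum_distrib_right[symmetric] power2_eq_square)

lemma graph_connected_const:
  assumes "graph_connected src tgt" and "\<And>a. f (src a) = f (tgt a)"
  shows "f u = f v"
proof -
  have "(u, v) \<in> ({(src a, tgt a) | a. True} \<union> {(tgt a, src a) | a. True})\<^sup>*"
    using assms(1) unfolding graph_connected_def by blast
  then show ?thesis
    by induction (auto simp: assms(2))
qed

lemma laplacian_plus_mean_proj_injective:
  fixes src tgt :: "'e::finite \<Rightarrow> 'v::finite"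
  assumes pos: "\<And>a. w a > 0" and conn: "graph_connected src tgt"
    and x: "(laplacian src tgt w + mean_proj) *v x = 0"
  shows "x = 0"
proof -
  let ?Q = "\<Sum>a\<in>UNIV. w a * (x $ src a - x $ tgt a)\<^sup>2"
  have "?Q + (\<Sum>i\<in>UNIV. x $ i)\<^sup>2 / real CARD('v) = x \<bullet> ((laplacian src tgt w + mean_proj) *v x)"
    by (simp add: matrix_vector_mult_add_rdistrib inner_add_right laplacian_quadratic_form
        inner_mean_proj)
  also have "\<dots> = 0"
    using x by simp
  finally have sum_eq: "?Q + (\<Sum>i\<in>UNIV. x $ i)\<^sup>2 / real CARD('v) = 0" .
  have Q_nonneg: "?Q \<ge> 0"
    using pos by (simp add: sum_nonneg less_imp_le)
  have "(\<Sum>i\<in>UNIV. x $ i)\<^sup>2 / real CARD('v) \<ge> 0"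
    by simp
  with sum_eq Q_nonneg have "?Q = 0" and sum_0: "(\<Sum>i\<in>UNIV. x $ i) = 0"
    by (simp_all add: add_nonneg_eq_0_iff)
  then have "w a * (x $ src a - x $ tgt a)\<^sup>2 = 0" for a
    using pos by (simp add: sum_nonneg_eq_0_iff less_imp_le)
  with pos have "x $ src a = x $ tgt a" for a
    by (metis less_irrefl mult_eq_0_iff power_eq_0_iff right_minus_eq)
  then have const: "x $ i = x $ j" for i j
    using graph_connected_const[OF conn, of "\<lambda>i. x $ i"] by blast
  have "(\<Sum>j\<in>UNIV. x $ j) = (\<Sum>j\<in>(UNIV::'v set). x $ i)" for i
    by (intro sum.cong refl const)
  then have "(\<Sum>j\<in>UNIV. x $ j) = real CARD('v) * x $ i" for i
    by simp
  with sum_0 have "real CARD('v) * x $ i = 0" for i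
    by simp
  then show ?thesis
    by (simp add: vec_eq_iff)
qed

lemma penrose_inverse_laplacian:
  fixes src tgt :: "'e::finite \<Rightarrow> 'v::finite"
  assumes pos: "\<And>a. w a > 0" and conn: "graph_connected src tgt"
  shows "\<exists>X. penrose_inverse (laplacian src tgt w) X"
proof -
  let ?L = "laplacian src tgt w"
  have "\<forall>x. (?L + mean_proj) *v x = 0 \<longrightarrow> x = 0"
    using laplacian_plus_mean_proj_injective[where w = w, OF pos conn] by blast
  then obtain M where M: "M ** (?L + mean_proj) = mat 1"
    using matrix_left_invertible_ker by blast
  have "1 v* ?L = 0"
    by (metis laplacian_mult_one laplacian_symmetric transpose_matrix_vector)
  then have "penrose_inverse ?L (M - mean_proj)"
    by (intro penrose_inverse_inverse_plus_projection mean_proj_symmetric mean_proj_idempotent M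
        mult_mean_proj_eq_0 mean_proj_mult_eq_0 laplacian_mult_one)
  then show ?thesis ..
qed

lemma pinv_laplacian_symmetric:
  fixes src tgt :: "'e::finite \<Rightarrow> 'v::finite"
  assumes "\<And>a. w a > 0" and "graph_connected src tgt"
  shows "transpose (pinv (laplacian src tgt w)) = pinv (laplacian src tgt w)"
proof -
  obtain X where X: "penrose_inverse (laplacian src tgt w) X"
    using penrose_inverse_laplacian[OF assms] ..
  show ?thesis
    by (simp add: pinv_eqI[OF X] penrose_inverse_symmetric[OF X laplacian_symmetric])
qed

lemma pinv_laplacian_mult_one:
  fixes src tgt :: "'e::finite \<Rightarrow> 'v::finite"
  assumes "\<And>a. w a > 0" and "graph_connected src tgt"
  shows "pinv (laplacian src tgt w) *v 1 = 0"
proof -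
  obtain X where X: "penrose_inverse (laplacian src tgt w) X"
    using penrose_inverse_laplacian[OF assms] ..
  have "transpose (laplacian src tgt w) *v 1 = 0"
    by (simp only: laplacian_symmetric laplacian_mult_one)
  with X show ?thesis
    by (simp only: pinv_eqI[OF X] penrose_inverse_kernel)
qed

lemma inner_indic: "indic a \<bullet> x = x $ a"
  by (simp add: inner_vec_def indic_def if_distrib[of "\<lambda>c. c * _"] sum.delta cong: if_cong)

definition elec_potential ::
    "('e::finite \<Rightarrow> 'v::finite) \<Rightarrow> ('e \<Rightarrow> 'v) \<Rightarrow> ('e \<Rightarrow> real) \<Rightarrow> 'v \<Rightarrow> 'v \<Rightarrow> real^'v" where
  "elec_potential src tgt w s t = pinv (laplacian src tgt w) *v (indic s - indic t)"

lemma elec_flow_eq_potential_diff: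
  fixes src tgt :: "'e::finite \<Rightarrow> 'v::finite"
  assumes "\<And>a. w a > 0" and "graph_connected src tgt"
  shows "elec_flow src tgt w s t $ a =
    w a * (elec_potential src tgt w (src a) (tgt a) $ s -
           elec_potential src tgt w (src a) (tgt a) $ t)"
proof -
  let ?X = "pinv (laplacian src tgt w)"
  have "elec_flow src tgt w s t $ a =
      w a * ((indic (src a) - indic (tgt a)) \<bullet> (?X *v (indic s - indic t)))"
    by (simp add: elec_flow_def matrix_vector_mul_assoc[symmetric] diagm_mult vector_mult_boundary
        inner_diff_left inner_indic)
  also have "\<dots> = w a * ((?X *v (indic (src a) - indic (tgt a))) \<bullet> (indic s - indic t))"
    by (simp only: inner_symmetric_matrix[OF pinv_laplacian_symmetric[OF assms]])
  finally show ?thesis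
    by (simp add: elec_potential_def inner_diff_right inner_commute[of _ "indic _"] inner_indic)
qed

lemma biharmonic_power2:
  fixes src tgt :: "'e::finite \<Rightarrow> 'v::finite"
  assumes "\<And>a. w a > 0" and "graph_connected src tgt"
  shows "(biharmonic src tgt w s t)\<^sup>2 = (\<Sum>k\<in>UNIV. (elec_potential src tgt w s t $ k)\<^sup>2)"
proof -
  let ?X = "pinv (laplacian src tgt w)" and ?b = "indic s - indic t"
  have "?b \<bullet> ((?X ** ?X) *v ?b) = (?X *v ?b) \<bullet> (?X *v ?b)"
    by (simp add: inner_symmetric_matrix[OF pinv_laplacian_symmetric[OF assms]]
        matrix_vector_mul_assoc[symmetric])
  then have "(biharmonic src tgt w s t)\<^sup>2 = (?X *v ?b) \<bullet> (?X *v ?b)"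
    by (simp add: biharmonic_def)
  then show ?thesis
    by (simp add: elec_potential_def inner_vec_def power2_eq_square)
qed

lemma sum_elec_potential:
  fixes src tgt :: "'e::finite \<Rightarrow> 'v::finite"
  assumes "\<And>a. w a > 0" and "graph_connected src tgt"
  shows "(\<Sum>k\<in>UNIV. elec_potential src tgt w s t $ k) = 0"
proof -
  let ?X = "pinv (laplacian src tgt w)"
  have "(\<Sum>k\<in>UNIV. elec_potential src tgt w s t $ k) = 1 \<bullet> (?X *v (indic s - indic t))"
    by (simp add: elec_potential_def inner_vec_def)
  also have "\<dots> = (?X *v 1) \<bullet> (indic s - indic t)"
    by (simp only: inner_symmetric_matrix[OF pinv_laplacian_symmetric[OF assms]])
  finally show ?thesis
    by (simp add: pinv_laplacian_mult_one[OF assms])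
qed

lemma sum_less_pairs_symmetric:
  fixes g :: "'a::{finite,linorder} \<Rightarrow> 'a \<Rightarrow> real"
  assumes sym: "\<And>s t. g s t = g t s" and diag: "\<And>s. g s s = 0"
  shows "(\<Sum>s\<in>UNIV. \<Sum>t\<in>UNIV. g s t) = 2 * (\<Sum>(s, t) \<in> {(s, t). s < t}. g s t)"
proof -
  let ?A = "{(s::'a, t). s < t}" and ?B = "{(s::'a, t). t < s}" and ?D = "{(s::'a, t). s = t}"
  have UNIV_split: "UNIV = ?A \<union> ?B \<union> ?D"
    by (auto simp: not_less_iff_gr_or_eq)
  have "(\<Sum>(s, t) \<in> ?A \<union> ?B. g s t) = (\<Sum>(s, t) \<in> ?A. g s t) + (\<Sum>(s, t) \<in> ?B. g s t)"
    by (rule sum.union_disjoint) auto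
  moreover have "(\<Sum>(s, t) \<in> UNIV. g s t) = (\<Sum>(s, t) \<in> ?A \<union> ?B. g s t) + (\<Sum>(s, t) \<in> ?D. g s t)"
    unfolding UNIV_split by (rule sum.union_disjoint) auto
  moreover have "(\<Sum>(s, t) \<in> ?B. g s t) = (\<Sum>(s, t) \<in> ?A. g s t)"
    by (rule sum.reindex_bij_witness[of _ prod.swap prod.swap]) (auto simp: sym)
  moreover have "(\<Sum>(s, t) \<in> ?D. g s t) = 0"
    by (rule sum.neutral) (auto simp: diag)
  ultimately show ?thesis
    by (simp add: sum.cartesian_product)
qed

lemma sum_less_pairs_power2_diff:
  fixes y :: "'a::{finite,linorder} \<Rightarrow> real"
  shows "(\<Sum>(s, t) \<in> {(s, t). s < t}. (y s - y t)\<^sup>2) =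
         real CARD('a) * (\<Sum>s\<in>UNIV. (y s)\<^sup>2) - (\<Sum>s\<in>UNIV. y s)\<^sup>2"
proof -
  have "2 * (\<Sum>(s, t) \<in> {(s, t). s < t}. (y s - y t)\<^sup>2) = (\<Sum>s\<in>UNIV. \<Sum>t\<in>UNIV. (y s - y t)\<^sup>2)"
    by (rule sum_less_pairs_symmetric[symmetric]) (simp_all add: power2_commute)
  also have "\<dots> = 2 * (real CARD('a) * (\<Sum>s\<in>UNIV. (y s)\<^sup>2) - (\<Sum>s\<in>UNIV. y s)\<^sup>2)"
    by (simp add: power2_diff sum.distrib sum_subtractf sum_distrib_left sum_distrib_right
        power2_eq_square algebra_simps)
  finally show ?thesis
    by simp
qed

theorem theorem4p1:
  fixes src tgt :: "'e::finite \<Rightarrow> 'v::{finite,linorder}"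
    and w :: "'e \<Rightarrow> real" and e :: 'e
  assumes no_loops: "\<And>a. src a \<noteq> tgt a"
    and simple: "\<And>a b. {src a, tgt a} = {src b, tgt b} \<Longrightarrow> a = b"
    and pos: "\<And>a. w a > 0"
    and conn: "graph_connected src tgt"
  shows "real CARD('v) * w e * (biharmonic src tgt w (src e) (tgt e))\<^sup>2 =
         (\<Sum>(s, t) \<in> {(s, t). s < t}. (elec_flow src tgt w s t $ e)\<^sup>2 / w e)"
proof -
  define y where "y k = elec_potential src tgt w (src e) (tgt e) $ k" for k
  have "(\<Sum>(s, t) \<in> {(s, t). s < t}. (elec_flow src tgt w s t $ e)\<^sup>2 / w e) =
        w e * (\<Sum>(s, t) \<in> {(s, t). s < t}. (y s - y t)\<^sup>2)"
    using pos[of e]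
    by (simp add: elec_flow_eq_potential_diff[where w = w, OF pos conn] y_def sum_distrib_left
        case_prod_unfold power2_eq_square mult_ac)
  also have "\<dots> = real CARD('v) * w e * (biharmonic src tgt w (src e) (tgt e))\<^sup>2"
    by (simp add: sum_less_pairs_power2_diff y_def sum_elec_potential[where w = w, OF pos conn]
        biharmonic_power2[where w = w, OF pos conn])
  finally show ?thesis ..
qed

end
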